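(* Let $n\ge 1$ be an integer and let $p,q$ be integers with $1\le p<q$, and set $\nu=-n+\frac{p}{q}$ (so $\nu<0$ is a non-integer rational and $n=\lfloor|\nu-1|\rfloor$). Then for every complex $z$ with $0<|z|<1$, $$\mathrm{B}(\nu,0,z)=-\sum_{k=0}^{q-1}\exp\!\left(-\frac{2\pi i p k}{q}\right)\log\!\left(1-z^{1/q}\exp\!\left(\frac{2\pi i k}{q}\right)\right)+\sum_{k=1}^{n}\frac{z^{p/q-k}}{p/q-k}.$$
   Context: For $|z|<1$ (with $z\neq 0$ when $\operatorname{Re}\nu\le 0$) and $\nu\in\mathbb{C}\setminus\{0,-1,-2,\dots\}$, define $\mathrm{B}(\nu,0,z):=\sum_{k=0}^{\infty}\frac{z^{k+\nu}}{k+\nu}$, where $z^{k+\nu}:=z^{k}z^{\nu}$ and $z^{\nu}=\exp(\nu\operatorname{Log} z)$ uses the principal branch. All powers $z^{1/q}$, $z^{p/q-k}:=z^{p/q}z^{-k}$ and logarithms denote principal branches. *)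

theory Defs
  imports "HOL-Analysis.Analysis"
begin

text \<open>B(nu,0,z) = sum_k z^(k+nu)/(k+nu), with z^(k+nu) := z^k * z^nu and
  z^nu = exp(nu * Ln z) the principal power (complex powr).\<close>
definition incBeta0 :: "complex \<Rightarrow> complex \<Rightarrow> complex" where
  "incBeta0 \<nu> z = (\<Sum>k. z ^ k * z powr \<nu> / (of_nat k + \<nu>))"

end

theory Submission
  imports Defs
begin

text \<open>Put \<open>w = z\<^bsup>1/q\<^esup>\<close> and \<open>\<zeta>\<^sub>k = exp (2\<pi>ik/q)\<close>. Averaging the series
  \<open>-Ln (1 - u) = \<Sum>\<^sub>j u\<^sup>j/j\<close> at the points \<open>u = w\<zeta>\<^sub>k\<close> with weights \<open>\<zeta>\<^sub>k\<^sup>-\<^sup>p\<close> keeps exactly the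
  exponents \<open>j = qm + p\<close>, so the logarithmic sum equals
  \<open>\<Sum>\<^sub>m q w\<^bsup>qm+p\<^esup>/(qm+p) = \<Sum>\<^sub>m z\<^sup>m z\<^bsup>p/q\<^esup>/(m + p/q) = B(p/q, 0, z)\<close>. Lowering the order
  from \<open>p/q\<close> to \<open>p/q - n\<close> only moves the first \<open>n\<close> terms of the series out as a
  finite sum.\<close>

lemma sum_roots_of_unity_power:
  fixes q :: nat and m :: int
  assumes "q > 0"
  shows "(\<Sum>k<q. exp (2 * of_real pi * \<i> * of_int m * of_nat k / of_nat q)) =
         (if int q dvd m then of_nat q else 0)"
proof -
  define a where "a = exp (2 * of_real pi * \<i> * of_int m / of_nat q)"
  have power_a: "exp (2 * of_real pi * \<i> * of_int m * of_nat k / of_nat q) = a ^ k" for k :: nat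
    unfolding a_def by (subst exp_of_nat_mult[symmetric]) (simp add: mult_ac)
  have a_eq_1_iff: "a = 1 \<longleftrightarrow> int q dvd m"
  proof
    assume "a = 1"
    then obtain r :: int where "2 * pi * of_int m / of_nat q = of_int (2 * r) * pi"
      unfolding a_def by (subst (asm) exp_eq_1) auto
    hence "real_of_int m = of_nat q * of_int r" using assms by (simp add: field_simps)
    hence "m = int q * r" by (metis of_int_eq_iff of_int_mult of_int_of_nat_eq)
    thus "int q dvd m" by simp
  next
    assume "int q dvd m"
    then obtain t where "m = int q * t" by blast
    thus "a = 1" unfolding a_def using assms by (subst exp_eq_1) (auto intro!: exI[of _ t])
  qed
  have "a ^ q = exp (2 * of_real pi * \<i> * of_int m)"
    unfolding a_def using assms by (simp add: exp_of_nat_mult[symmetric])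
  also have "\<dots> = 1" by (subst exp_eq_1) (auto intro!: exI[of _ m])
  finally have "a ^ q = 1" .
  thus ?thesis by (simp add: power_a geometric_sum a_eq_1_iff[symmetric])
qed

lemma power_powr_of_nat:
  fixes z a :: complex
  assumes "z \<noteq> 0"
  shows "(z powr a) ^ n = z powr (of_nat n * a)"
  using assms by (simp add: powr_def exp_of_nat_mult[symmetric] mult_ac)

lemma norm_powr_less_one:
  fixes z :: complex and r :: real
  assumes "norm z < 1" and "r > 0"
  shows "norm (z powr of_real r) < 1"
proof (cases "z = 0")
  case False
  have "norm (z powr of_real r) = norm z powr r" by (subst norm_powr_real_powr') auto
  also have "\<dots> < 1 powr r" using assms False by (intro powr_less_mono2) auto
  finally show ?thesis by simp
qed simp

lemma roots_of_unity_filter_sums: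
  fixes p q :: nat and c :: "nat \<Rightarrow> complex" and g :: "complex \<Rightarrow> complex" and w :: complex
  defines "\<zeta> \<equiv> \<lambda>k::nat. exp (2 * of_real pi * \<i> * of_nat k / of_nat q)"
  assumes "p < q"
    and series: "\<And>k. (\<lambda>j. c j * (w * \<zeta> k) ^ j) sums g (w * \<zeta> k)"
  shows "(\<lambda>m. of_nat q * c (q * m + p) * w ^ (q * m + p)) sums
           (\<Sum>k<q. exp (- 2 * of_real pi * \<i> * of_nat p * of_nat k / of_nat q) * g (w * \<zeta> k))"
    (is "_ sums (\<Sum>k<q. ?E k * _)")
proof -
  have q: "q > 0" using \<open>p < q\<close> by simp
  define f where "f j = (if j mod q = p then of_nat q * c j * w ^ j else 0)" for j
  have weights: "(\<Sum>k<q. ?E k * \<zeta> k ^ j) = (if j mod q = p then of_nat q else 0)" for j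
  proof -
    have "?E k * \<zeta> k ^ j =
          exp (2 * of_real pi * \<i> * of_int (int j - int p) * of_nat k / of_nat q)" for k
      unfolding \<zeta>_def
      by (simp add: exp_of_nat_mult[symmetric] exp_add[symmetric] field_simps diff_divide_distrib)
    moreover have "int q dvd int j - int p \<longleftrightarrow> j mod q = p"
      using \<open>p < q\<close> by (simp add: mod_eq_dvd_iff[symmetric] zmod_int[symmetric] del: of_nat_mod)
    ultimately show ?thesis using sum_roots_of_unity_power[OF q, of "int j - int p"] by simp
  qed
  have "(\<lambda>j. \<Sum>k<q. ?E k * (c j * (w * \<zeta> k) ^ j)) sums (\<Sum>k<q. ?E k * g (w * \<zeta> k))"
    by (intro sums_sum sums_mult series)
  moreover have "(\<Sum>k<q. ?E k * (c j * (w * \<zeta> k) ^ j)) = f j" for j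
  proof -
    have "(\<Sum>k<q. ?E k * (c j * (w * \<zeta> k) ^ j)) = c j * w ^ j * (\<Sum>k<q. ?E k * \<zeta> k ^ j)"
      by (simp add: sum_distrib_left power_mult_distrib mult_ac)
    thus ?thesis unfolding weights by (simp add: f_def)
  qed
  ultimately have "f sums (\<Sum>k<q. ?E k * g (w * \<zeta> k))" by simp
  moreover have "strict_mono (\<lambda>m. q * m + p)" using q by (auto simp: strict_mono_def)
  moreover have "f j = 0" if "j \<notin> range (\<lambda>m. q * m + p)" for j
  proof -
    have "j = q * (j div q) + j mod q" by simp
    thus ?thesis using that unfolding f_def by (metis rangeI)
  qed
  ultimately have "(\<lambda>m. f (q * m + p)) sums (\<Sum>k<q. ?E k * g (w * \<zeta> k))"
    using sums_mono_reindex by blast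
  moreover have "f (q * m + p) = of_nat q * c (q * m + p) * w ^ (q * m + p)" for m
    using \<open>p < q\<close> by (simp add: f_def)
  ultimately show ?thesis by simp
qed

lemma incBeta0_diff_of_nat:
  fixes z a S :: complex
  assumes "z \<noteq> 0" and S: "(\<lambda>m. z ^ m * z powr a / (of_nat m + a)) sums S"
  shows "incBeta0 (a - of_nat n) z =
           S + (\<Sum>k=1..n. z powr a * inverse (z ^ k) / (a - of_nat k))"
proof -
  define T where "T i = z ^ i * z powr (a - of_nat n) / (of_nat i + (a - of_nat n))" for i
  have powr_diff: "z powr (a - of_nat n) = z powr a * inverse (z ^ n)"
    using assms(1)
    by (simp add: powr_def left_diff_distrib exp_diff exp_of_nat_mult divide_inverse)
  have "T (i + n) = z ^ i * z powr a / (of_nat i + a)" for i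
    using assms(1) by (simp add: T_def powr_diff power_add)
  hence "(\<lambda>i. T (i + n)) sums S" using S by simp
  hence "incBeta0 (a - of_nat n) z = S + (\<Sum>i<n. T i)"
    unfolding incBeta0_def T_def[symmetric] by (simp add: sums_iff_shift sums_iff)
  also have "(\<Sum>i<n. T i) = (\<Sum>k=1..n. z powr a * inverse (z ^ k) / (a - of_nat k))"
  proof (rule sum.reindex_bij_witness[of _ "\<lambda>k. n - k" "\<lambda>i. n - i"])
    fix i assume "i \<in> {..<n}"
    hence "z ^ n = z ^ i * z ^ (n - i)" and "of_nat i + (a - of_nat n) = a - of_nat (n - i)"
      by (simp_all add: power_add[symmetric] of_nat_diff)
    thus "z powr a * inverse (z ^ (n - i)) / (a - of_nat (n - i)) = T i"
      unfolding T_def powr_diff using assms(1) by (simp only:) (simp add: field_simps)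
  qed auto
  finally show ?thesis .
qed

theorem theorem2:
  fixes n p q :: nat and z :: complex
  assumes "n \<ge> 1" and "1 \<le> p" and "p < q"
    and "0 < norm z" and "norm z < 1"
  shows "incBeta0 (- of_nat n + of_nat p / of_nat q) z =
     - (\<Sum>k<q. exp (- 2 * of_real pi * \<i> * of_nat p * of_nat k / of_nat q) *
           Ln (1 - z powr (1 / of_nat q) * exp (2 * of_real pi * \<i> * of_nat k / of_nat q)))
     + (\<Sum>k=1..n. (z powr (of_nat p / of_nat q) * inverse (z ^ k)) /
                   (of_nat p / of_nat q - of_nat k))"
proof -
  define w where "w = z powr (1 / of_nat q)"
  have z: "z \<noteq> 0" and q: "q > 0" using assms by auto
  have "norm w < 1"
    using norm_powr_less_one[of z "1 / real q"] assms q by (simp add: w_def)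
  have "(\<lambda>j. 1 / of_nat j * u ^ j) sums - Ln (1 - u)" if "norm u < 1" for u
    using sums_minus[OF Ln_series[of "- u"]] that by (simp add: power_minus')
  moreover have "norm (w * exp (2 * of_real pi * \<i> * of_nat k / of_nat q)) < 1" for k
    using \<open>norm w < 1\<close> by (simp add: norm_mult norm_exp_eq_Re)
  ultimately have "(\<lambda>j. 1 / of_nat j * (w * exp (2 * of_real pi * \<i> * of_nat k / of_nat q)) ^ j)
           sums - Ln (1 - w * exp (2 * of_real pi * \<i> * of_nat k / of_nat q))" for k
    by blast
  from roots_of_unity_filter_sums[OF \<open>p < q\<close> this]
  have "(\<lambda>m. z ^ m * z powr (of_nat p / of_nat q) / (of_nat m + of_nat p / of_nat q)) sums
          - (\<Sum>k<q. exp (- 2 * of_real pi * \<i> * of_nat p * of_nat k / of_nat q) *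
               Ln (1 - w * exp (2 * of_real pi * \<i> * of_nat k / of_nat q)))"
    using z q by (simp add: w_def power_add power_mult power_powr_of_nat sum_negf field_simps)
  from incBeta0_diff_of_nat[OF z this, of n] show ?thesis
    by (simp add: w_def add.commute)
qed

end
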